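(* Let $d\ge 1$ and let $p(x,y)$ be a nonzero real binary form of degree $d$ having exactly $\tau$ real linear factors, counted with multiplicity. Suppose $$p(x,y)=\sum_{k=1}^r \lambda_k(\cos\theta_k\, x-\sin\theta_k\, y)^d,$$ where $r\ge 2$, $-\tfrac{\pi}{2}<\theta_1<\theta_2<\dots<\theta_r\le\tfrac{\pi}{2}$, and all $\lambda_k$ are nonzero real numbers. Let $\sigma$ be the number of sign changes in the sequence $(\lambda_1,\lambda_2,\dots,\lambda_r,(-1)^d\lambda_1)$. Then $\tau\le\sigma$. *)

theory Defs
  imports Complex_Main
begin

definition binform :: "nat \<Rightarrow> (nat \<Rightarrow> real) \<Rightarrow> real \<Rightarrow> real \<Rightarrow> real" where
  "binform d c = (\<lambda>x y. \<Sum>i\<le>d. c i * x ^ i * y ^ (d - i))"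

definition is_binary_form :: "nat \<Rightarrow> (real \<Rightarrow> real \<Rightarrow> real) \<Rightarrow> bool" where
  "is_binary_form d f \<longleftrightarrow> (\<exists>c. f = binform d c)"

definition has_lin_factors :: "nat \<Rightarrow> (real \<Rightarrow> real \<Rightarrow> real) \<Rightarrow> nat \<Rightarrow> bool" where
  "has_lin_factors d p k \<longleftrightarrow> k \<le> d \<and>
     (\<exists>(a::nat \<Rightarrow> real) (b::nat \<Rightarrow> real) g.
        (\<forall>i<k. a i \<noteq> 0 \<or> b i \<noteq> 0) \<and> is_binary_form (d - k) g \<and>
        (\<forall>x y. p x y = (\<Prod>i<k. a i * x + b i * y) * g x y))"

definition num_real_lin_factors :: "nat \<Rightarrow> (real \<Rightarrow> real \<Rightarrow> real) \<Rightarrow> nat" where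
  "num_real_lin_factors d p = (GREATEST k. has_lin_factors d p k)"

definition sign_changes :: "real list \<Rightarrow> nat" where
  "sign_changes xs = (let ys = filter (\<lambda>x. x \<noteq> 0) xs in
     card {i. Suc i < length ys \<and> ys ! i * ys ! Suc i < 0})"

end

theory Submission
  imports Defs "HOL-Computational_Algebra.Polynomial"
begin

(* A binary form p of degree n is encoded by its dehomogenisation f(t) = p(t,1), a real polynomial
   of degree at most n.  Real linear factors of p correspond to real roots of f and to roots at
   infinity, so the right count is  proj_root_count n f = (real roots of f with multiplicity)
   + (n - degree f).

   At a sign change pick an index j, substitute so that the
   j-th linear form becomes constant and differentiate: this deletes the j-th term, keeps the
   other vectors ordered and does not increase the sign changes, and parity closes the gap of one
   left by Rolle. *)


section \<open>Counting real roots, including roots at infinity\<close>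

definition root_count :: "real poly \<Rightarrow> nat" where
  "root_count f = (\<Sum>x | poly f x = 0. order x f)"

text \<open>Roots of f seen as a binary form of degree n: the missing degree counts as roots at infinity.\<close>
definition proj_root_count :: "nat \<Rightarrow> real poly \<Rightarrow> nat" where
  "proj_root_count n f = root_count f + (n - degree f)"

lemma root_count_le_degree: "f \<noteq> 0 \<Longrightarrow> root_count f \<le> degree f"
  unfolding root_count_def by (rule sum_order_le_degree)

lemma root_count_sum_superset:
  assumes "f \<noteq> 0" "finite A" "{x. poly f x = 0} \<subseteq> A"
  shows "root_count f = (\<Sum>x\<in>A. order x f)"
  unfolding root_count_def
  by (rule sum.mono_neutral_left) (use assms in \<open>auto simp: order_root\<close>)

lemma root_count_mult:
  assumes "p \<noteq> 0" "q \<noteq> 0"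
  shows "root_count (p * q) = root_count p + root_count q"
proof -
  let ?A = "{x. poly p x = 0} \<union> {x. poly q x = 0}"
  have fin: "finite ?A" using assms poly_roots_finite by auto
  have "root_count (p * q) = (\<Sum>x\<in>?A. order x (p * q))"
    by (rule root_count_sum_superset) (use assms fin in auto)
  also have "\<dots> = (\<Sum>x\<in>?A. order x p) + (\<Sum>x\<in>?A. order x q)"
    using assms by (simp add: order_mult sum.distrib)
  also have "(\<Sum>x\<in>?A. order x p) = root_count p"
    by (rule root_count_sum_superset[symmetric]) (use assms fin in auto)
  also have "(\<Sum>x\<in>?A. order x q) = root_count q"
    by (rule root_count_sum_superset[symmetric]) (use assms fin in auto)
  finally show ?thesis .
qed

lemma root_count_linear:
  assumes "L \<noteq> 0" "degree L \<le> 1"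
  shows "root_count L = degree L"
proof -
  obtain b a where L: "L = [:b, a:]"
  proof
    show "L = [:coeff L 0, coeff L 1:]"
    proof (rule poly_eqI)
      fix n show "coeff L n = coeff [:coeff L 0, coeff L 1:] n"
        using assms(2) by (cases n; cases "n - 1") (auto simp: coeff_pCons intro!: coeff_eq_0)
    qed
  qed
  show ?thesis
  proof (cases "a = 0")
    case True
    then show ?thesis using L assms(1) by (simp add: root_count_def)
  next
    case False
    have eq: "L = smult a [:- (- b / a), 1:]" using False L by simp
    have roots: "{x. poly L x = 0} = {- b / a}" using False L by (auto simp: field_simps)
    have "order (- b / a) L = 1"
      by (subst eq, subst order_smult[OF False]) (metis order_power_n_n power_one_right)
    then show ?thesis using False L unfolding root_count_def roots by simp
  qed
qed

lemma root_count_prod_linear: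
  assumes "\<And>i. i < K \<Longrightarrow> L i \<noteq> 0 \<and> degree (L i) \<le> 1"
  shows "(\<Prod>i<K. L i) \<noteq> 0 \<and> root_count (\<Prod>i<K. L i) = degree (\<Prod>i<K. L i)
    \<and> degree (\<Prod>i<K. L i) \<le> K"
  using assms
proof (induction K)
  case 0
  then show ?case by (simp add: root_count_def)
next
  case (Suc K)
  then have "(\<Prod>i<K. L i) \<noteq> 0" "root_count (\<Prod>i<K. L i) = degree (\<Prod>i<K. L i)"
    "degree (\<Prod>i<K. L i) \<le> K" "L K \<noteq> 0" "degree (L K) \<le> 1"
    by auto
  then show ?case by (simp add: root_count_mult root_count_linear degree_mult_eq)
qed

lemma linear_factors_le_proj_root_count:
  assumes "f \<noteq> 0" "f = (\<Prod>i<K. L i) * g" "\<And>i. i < K \<Longrightarrow> L i \<noteq> 0 \<and> degree (L i) \<le> 1"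
    and "degree g \<le> n - K" "K \<le> n"
  shows "K \<le> proj_root_count n f"
proof -
  note P = root_count_prod_linear[of K L, OF assms(3)]
  have g: "g \<noteq> 0" using assms(1,2) by auto
  have "root_count f = degree (\<Prod>i<K. L i) + root_count g"
    using assms(2) P g by (simp add: root_count_mult)
  moreover have "degree f = degree (\<Prod>i<K. L i) + degree g"
    using assms(2) P g by (simp add: degree_mult_eq)
  ultimately show ?thesis using assms(4,5) unfolding proj_root_count_def by linarith
qed

lemma prod_lessThan_add: "(\<Prod>i<m + K. h i) = (\<Prod>i<m. h i) * (\<Prod>i<K. h (m + i))"
  for h :: "nat \<Rightarrow> 'a::comm_monoid_mult"
  by (induction K) (simp_all add: mult.assoc)

lemma root_count_linear_power: "root_count ([:- x, 1:] ^ m) = m"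
  using root_count_prod_linear[of m "\<lambda>i. [:- x, 1:]"] by (simp add: degree_power_eq)

lemma split_off_roots:
  fixes f :: "real poly"
  shows "f \<noteq> 0 \<Longrightarrow> \<exists>\<rho> g. f = (\<Prod>i<root_count f. [:- \<rho> i, 1:]) * g"
proof (induction f rule: poly_root_order_induct)
  case 0
  then show ?case by simp
next
  case (no_roots p)
  then have "root_count p = 0" unfolding root_count_def by simp
  then show ?case by auto
next
  case (root p x m)
  have p: "p \<noteq> 0" using root.prems by auto
  then obtain \<rho> g where pg: "p = (\<Prod>i<root_count p. [:- \<rho> i, 1:]) * g" using root.IH by auto
  have count: "root_count ([:- x, 1:] ^ m * p) = m + root_count p"
    using p by (simp add: root_count_mult root_count_linear_power)
  define \<rho>' where "\<rho>' = (\<lambda>i. if i < m then x else \<rho> (i - m))"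
  have "(\<Prod>i<m + root_count p. [:- \<rho>' i, 1:])
      = (\<Prod>i<m. [:- \<rho>' i, 1:]) * (\<Prod>i<root_count p. [:- \<rho>' (m + i), 1:])"
    by (rule prod_lessThan_add)
  also have "(\<Prod>i<m. [:- \<rho>' i, 1:]) = [:- x, 1:] ^ m" by (simp add: \<rho>'_def)
  also have "(\<Prod>i<root_count p. [:- \<rho>' (m + i), 1:]) = (\<Prod>i<root_count p. [:- \<rho> i, 1:])"
    by (simp add: \<rho>'_def)
  finally show ?case using pg count by (metis mult.assoc)
qed

text \<open>Conversely, exactly proj_root_count n f linear factors split off f (padding with constants).\<close>
lemma proj_root_count_factorization:
  fixes f :: "real poly"
  assumes "f \<noteq> 0" "degree f \<le> n"
  obtains L g where "\<And>i. i < proj_root_count n f \<Longrightarrow> L i \<noteq> 0 \<and> degree (L i) \<le> 1"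
    "degree g \<le> n - proj_root_count n f" "f = (\<Prod>i<proj_root_count n f. L i) * g"
proof -
  obtain \<rho> g where fg: "f = (\<Prod>i<root_count f. [:- \<rho> i, 1:]) * g"
    using split_off_roots assms by blast
  define L where "L = (\<lambda>i. if i < root_count f then [:- \<rho> i, 1:] else 1)"
  have "(\<Prod>i<proj_root_count n f. L i)
      = (\<Prod>i<root_count f. L i) * (\<Prod>i<n - degree f. L (root_count f + i))"
    unfolding proj_root_count_def by (rule prod_lessThan_add)
  also have "\<dots> = (\<Prod>i<root_count f. [:- \<rho> i, 1:])" by (simp add: L_def)
  finally have prod: "(\<Prod>i<proj_root_count n f. L i) = (\<Prod>i<root_count f. [:- \<rho> i, 1:])" .
  have g: "g \<noteq> 0" and P: "(\<Prod>i<root_count f. [:- \<rho> i, 1:]) \<noteq> 0" using fg assms(1) by auto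
  have "degree (\<Prod>i<root_count f. [:- \<rho> i, 1:]) = root_count f"
    by (simp add: degree_prod_eq_sum_degree)
  then have "degree f = root_count f + degree g"
    using fg g P by (metis degree_mult_eq)
  then have "degree g \<le> n - proj_root_count n f"
    using assms(2) unfolding proj_root_count_def by linarith
  moreover have "\<And>i. i < proj_root_count n f \<Longrightarrow> L i \<noteq> 0 \<and> degree (L i) \<le> 1"
    by (simp add: L_def)
  ultimately show ?thesis using that prod fg by metis
qed

text \<open>Intermediate value theorem: a real polynomial of odd degree has a real root.\<close>
lemma odd_degree_has_root:
  fixes f :: "real poly"
  assumes "odd (degree f)"
  shows "\<exists>x. poly f x = 0"
proof -
  have main: "\<exists>x. poly f x = 0" if lc: "lead_coeff f > 0" "odd (degree f)" for f :: "real poly"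
  proof -
    obtain N where N: "\<forall>x\<ge>N. poly f x \<ge> lead_coeff f" using poly_pinfty_gt_lc[OF lc(1)] by auto
    define g where "g = - pcompose f [:0, -1:]"
    have "lead_coeff (pcompose f [:0, -1:]) = lead_coeff f * (-1) ^ degree f"
      by (subst lead_coeff_comp) auto
    then have lg: "lead_coeff g > 0" using lc by (simp add: g_def)
    obtain M where M: "\<forall>x\<ge>M. poly g x \<ge> lead_coeff g" using poly_pinfty_gt_lc[OF lg] by auto
    define b where "b = max N (max M 0) + 1"
    have "poly f b > 0" using N lc by (smt (verit) b_def)
    moreover have "poly g b > 0" using M lg by (smt (verit) b_def)
    then have "poly f (- b) < 0" by (simp add: g_def poly_pcompose)
    moreover have "- b < b" using b_def by simp
    ultimately show ?thesis using poly_IVT by (metis mult_neg_pos)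
  qed
  show ?thesis
  proof (cases "lead_coeff f > 0")
    case True
    then show ?thesis using main assms by blast
  next
    case False
    have "f \<noteq> 0" using assms by auto
    then have "lead_coeff (- f) > 0" using False by (simp add: less_le)
    then obtain x where "poly (- f) x = 0" using main assms by (metis degree_minus)
    then show ?thesis by auto
  qed
qed

text \<open>Non-real roots come in conjugate pairs; here this is proved by splitting off real roots
  until none are left, when the degree must be even.\<close>
lemma root_count_parity:
  fixes f :: "real poly"
  shows "f \<noteq> 0 \<Longrightarrow> even (root_count f + degree f)"
proof (induction f rule: poly_root_order_induct)
  case 0
  then show ?case by simp
next
  case (no_roots p)
  then have "root_count p = 0" unfolding root_count_def by simp
  moreover have "even (degree p)" using odd_degree_has_root no_roots by blast
  ultimately show ?case by simp
next
  case (root p x m)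
  have p: "p \<noteq> 0" using root.prems by auto
  have "root_count ([:- x, 1:] ^ m * p) = m + root_count p"
    using p by (simp add: root_count_mult root_count_linear_power)
  moreover have "degree ([:- x, 1:] ^ m * p) = m + degree p"
    using p by (simp add: degree_mult_eq degree_power_eq)
  ultimately show ?case using root.IH p by simp
qed

lemma proj_root_count_parity:
  "f \<noteq> 0 \<Longrightarrow> degree f \<le> n \<Longrightarrow> even (proj_root_count n f + n)"
  using root_count_parity[of f] unfolding proj_root_count_def
  by (metis add.commute add.left_commute dvd_add_right_iff even_add le_add_diff_inverse)

lemma proj_root_count_le: "f \<noteq> 0 \<Longrightarrow> degree f \<le> n \<Longrightarrow> proj_root_count n f \<le> n"
  using root_count_le_degree[of f] unfolding proj_root_count_def by linarith

text \<open>Rolle: between any two of the (distinct) roots in R lies a root of the derivative,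
  giving card R - 1 roots of the derivative below Max R and outside R.\<close>
lemma rolle_roots:
  fixes f :: "real poly"
  assumes "finite R"
  shows "R \<noteq> {} \<Longrightarrow> (\<forall>x\<in>R. poly f x = 0) \<Longrightarrow>
    \<exists>Y. finite Y \<and> Y \<inter> R = {} \<and> card R \<le> card Y + 1 \<and>
        (\<forall>y\<in>Y. poly (pderiv f) y = 0 \<and> y < Max R)"
  using assms
proof (induction R rule: finite_linorder_max_induct)
  case empty
  then show ?case by simp
next
  case (insert M A)
  show ?case
  proof (cases "A = {}")
    case True
    then show ?thesis by (intro exI[of _ "{}"]) auto
  next
    case False
    obtain Y where Y: "finite Y" "Y \<inter> A = {}" "card A \<le> card Y + 1"
      "\<forall>y\<in>Y. poly (pderiv f) y = 0 \<and> y < Max A"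
      using insert False by auto
    have MA: "Max A < M" "Max A \<in> A" using insert False by auto
    obtain y where y: "Max A < y" "y < M" "poly (pderiv f) y = 0"
      using poly_MVT[OF MA(1), of f] insert MA by auto
    have "Max (insert M A) = M" using MA(1) False insert.hyps(1) by (simp add: Max_insert)
    moreover have "y \<notin> Y" "y \<notin> A" using Y(4) y insert.hyps Max_ge by fastforce+
    moreover have "card (insert M A) = card A + 1" using insert by auto
    ultimately show ?thesis using Y y MA
      by (intro exI[of _ "insert y Y"]) auto
  qed
qed

lemma proj_root_count_pderiv:
  fixes f :: "real poly"
  assumes "f \<noteq> 0" "degree f \<le> n" "pderiv f \<noteq> 0"
  shows "proj_root_count n f \<le> proj_root_count (n - 1) (pderiv f) + 1"
proof -
  have "degree f \<ge> 1" using assms(3) by (metis le_less_linear less_one pderiv_eq_0_iff)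
  moreover have "degree (pderiv f) = degree f - 1" by (rule degree_pderiv)
  moreover have "root_count f \<le> root_count (pderiv f) + 1"
  proof -
    let ?R = "{x. poly f x = 0}" and ?S = "{x. poly (pderiv f) x = 0}"
    have finR: "finite ?R" and finS: "finite ?S" using poly_roots_finite assms(1,3) by auto
    obtain Y where Y: "finite Y" "Y \<inter> ?R = {}" "card ?R \<le> card Y + 1" "Y \<subseteq> ?S"
    proof (cases "?R = {}")
      case True
      then show ?thesis using that[of "{}"] by simp
    next
      case False
      then show ?thesis using rolle_roots[OF finR False, of f] that by auto
    qed
    text \<open>A root of multiplicity m of f is a root of multiplicity m - 1 of f'.\<close>
    have "root_count f = (\<Sum>x\<in>?R. Suc (order x (pderiv f)))"
      unfolding root_count_def using order_pderiv[of f] assms(1,3) by simp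
    then have Rf: "root_count f = (\<Sum>x\<in>?R. order x (pderiv f)) + card ?R"
      unfolding Suc_eq_plus1 sum.distrib by simp
    have "card Y \<le> (\<Sum>y\<in>Y. order y (pderiv f))"
      using sum_mono[of Y "\<lambda>_. 1::nat" "\<lambda>y. order y (pderiv f)"] Y(4) assms(3)
      by (auto simp: order_root Suc_le_eq)
    moreover have "(\<Sum>x\<in>?R. order x (pderiv f)) + (\<Sum>y\<in>Y. order y (pderiv f))
        = (\<Sum>x\<in>?R \<union> Y. order x (pderiv f))"
      by (rule sum.union_disjoint[symmetric]) (use finR Y in auto)
    moreover have "(\<Sum>x\<in>?R \<union> Y. order x (pderiv f)) \<le> (\<Sum>x\<in>?S \<union> (?R \<union> Y). order x (pderiv f))"
      by (rule sum_mono2) (use finS finR Y in auto)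
    moreover have "(\<Sum>x\<in>?S \<union> (?R \<union> Y). order x (pderiv f)) = root_count (pderiv f)"
      by (rule root_count_sum_superset[symmetric]) (use assms(3) finS finR Y in auto)
    ultimately show ?thesis using Rf Y(3) by linarith
  qed
  ultimately show ?thesis unfolding proj_root_count_def using assms(2) by linarith
qed


section \<open>Projective substitutions\<close>

text \<open>The polynomial of a binary form of degree m after the linear change of variables
  (x, y) -> (alpha x + beta y, gamma x + delta y); in the variable t this is
  t -> (alpha t + beta) / (gamma t + delta), cleared of denominators.\<close>
definition hsubst :: "real \<Rightarrow> real \<Rightarrow> real \<Rightarrow> real \<Rightarrow> nat \<Rightarrow> real poly \<Rightarrow> real poly" where
  "hsubst \<alpha> \<beta> \<gamma> \<delta> m f = (\<Sum>i\<le>m. smult (coeff f i) ([:\<beta>, \<alpha>:] ^ i * [:\<delta>, \<gamma>:] ^ (m - i)))"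

lemma degree_linear_power: "degree ([:b, a:] ^ n) \<le> n"
proof -
  have "degree ([:b, a:] ^ n) \<le> degree [:b, a:] * n" by (rule degree_power_le)
  also have "\<dots> \<le> 1 * n" by (intro mult_le_mono1) simp
  finally show ?thesis by simp
qed

lemma degree_hsubst: "degree (hsubst \<alpha> \<beta> \<gamma> \<delta> m f) \<le> m"
  unfolding hsubst_def
proof (rule degree_sum_le)
  fix i assume "i \<in> {..m}"
  have "degree ([:\<beta>, \<alpha>:] ^ i * [:\<delta>, \<gamma>:] ^ (m - i))
      \<le> degree ([:\<beta>, \<alpha>:] ^ i) + degree ([:\<delta>, \<gamma>:] ^ (m - i))"
    by (rule degree_mult_le)
  also have "\<dots> \<le> i + (m - i)" by (intro add_mono degree_linear_power)
  finally show "degree (smult (coeff f i) ([:\<beta>, \<alpha>:] ^ i * [:\<delta>, \<gamma>:] ^ (m - i))) \<le> m"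
    using \<open>i \<in> {..m}\<close> by (simp add: order.trans[OF degree_smult_le])
qed simp

lemma poly_altdef_le:
  fixes f :: "real poly"
  assumes "degree f \<le> m"
  shows "poly f x = (\<Sum>i\<le>m. coeff f i * x ^ i)"
proof -
  have "poly f x = (\<Sum>i\<le>degree f. coeff f i * x ^ i)" by (rule poly_altdef)
  also have "\<dots> = (\<Sum>i\<le>m. coeff f i * x ^ i)"
    by (rule sum.mono_neutral_left) (use assms in \<open>auto simp: coeff_eq_0\<close>)
  finally show ?thesis .
qed

lemma poly_hsubst:
  assumes "degree f \<le> m" "\<gamma> * t + \<delta> \<noteq> 0"
  shows "poly (hsubst \<alpha> \<beta> \<gamma> \<delta> m f) t
    = (\<gamma> * t + \<delta>) ^ m * poly f ((\<alpha> * t + \<beta>) / (\<gamma> * t + \<delta>))"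
proof -
  let ?D = "\<gamma> * t + \<delta>" and ?N = "\<alpha> * t + \<beta>"
  have "poly (hsubst \<alpha> \<beta> \<gamma> \<delta> m f) t = (\<Sum>i\<le>m. coeff f i * (?N ^ i * ?D ^ (m - i)))"
    unfolding hsubst_def by (simp add: poly_sum algebra_simps)
  also have "\<dots> = (\<Sum>i\<le>m. ?D ^ m * (coeff f i * (?N / ?D) ^ i))"
  proof (rule sum.cong)
    fix i assume "i \<in> {..m}"
    then have "?D ^ m = ?D ^ i * ?D ^ (m - i)" by (simp flip: power_add)
    then show "coeff f i * (?N ^ i * ?D ^ (m - i)) = ?D ^ m * (coeff f i * (?N / ?D) ^ i)"
      using assms(2) by (simp add: power_divide field_simps)
  qed simp
  also have "\<dots> = ?D ^ m * poly f (?N / ?D)"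
    by (simp add: poly_altdef_le[OF assms(1)] sum_distrib_left)
  finally show ?thesis .
qed

lemma poly_eq_cofinite:
  fixes p q :: "real poly"
  assumes "finite S" "\<And>t. t \<notin> S \<Longrightarrow> poly p t = poly q t"
  shows "p = q"
proof (rule ccontr)
  assume "p \<noteq> q"
  then have "finite {t. poly (p - q) t = 0}" by (intro poly_roots_finite) simp
  then have "finite ({t. poly (p - q) t = 0} \<union> S)" using assms(1) by simp
  moreover have "{t. poly (p - q) t = 0} \<union> S = UNIV" using assms(2) by auto
  ultimately show False using infinite_UNIV_char_0 by metis
qed

lemma finite_pole_set:
  assumes "\<alpha> * \<delta> - \<beta> * \<gamma> \<noteq> 0"
  shows "finite {t::real. \<gamma> * t + \<delta> = 0}"
proof -
  have "[:\<delta>, \<gamma>:] \<noteq> 0" using assms by auto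
  from poly_roots_finite[OF this] show ?thesis by (simp add: algebra_simps)
qed

text \<open>An invertible substitution maps a nonzero form to a nonzero form: otherwise f would vanish
  on the infinite image of the Moebius map.\<close>
lemma hsubst_nonzero:
  assumes "\<alpha> * \<delta> - \<beta> * \<gamma> \<noteq> 0" "f \<noteq> 0" "degree f \<le> m"
  shows "hsubst \<alpha> \<beta> \<gamma> \<delta> m f \<noteq> 0"
proof
  assume zero: "hsubst \<alpha> \<beta> \<gamma> \<delta> m f = 0"
  let ?U = "{t::real. \<gamma> * t + \<delta> \<noteq> 0}"
  let ?h = "\<lambda>t. (\<alpha> * t + \<beta>) / (\<gamma> * t + \<delta>)"
  have "infinite ?U"
  proof
    assume "finite ?U"
    then have "finite (?U \<union> {t. \<gamma> * t + \<delta> = 0})" using finite_pole_set[OF assms(1)] by simp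
    moreover have "?U \<union> {t. \<gamma> * t + \<delta> = 0} = UNIV" by auto
    ultimately show False using infinite_UNIV_char_0 by metis
  qed
  moreover have "inj_on ?h ?U"
  proof (rule inj_onI)
    fix x y assume xy: "x \<in> ?U" "y \<in> ?U" "?h x = ?h y"
    then have "(\<alpha> * x + \<beta>) * (\<gamma> * y + \<delta>) = (\<alpha> * y + \<beta>) * (\<gamma> * x + \<delta>)"
      by (simp add: field_simps)
    then have "(\<alpha> * \<delta> - \<beta> * \<gamma>) * (x - y) = 0" by (simp add: algebra_simps)
    then show "x = y" using assms(1) by simp
  qed
  ultimately have "infinite (?h ` ?U)" using finite_imageD by blast
  moreover have "?h ` ?U \<subseteq> {x. poly f x = 0}"
  proof
    fix x assume "x \<in> ?h ` ?U"
    then obtain t where t: "\<gamma> * t + \<delta> \<noteq> 0" "x = ?h t" by auto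
    then have "(\<gamma> * t + \<delta>) ^ m * poly f x = 0"
      using poly_hsubst[OF assms(3), of \<gamma> t \<delta> \<alpha> \<beta>] zero by simp
    then show "x \<in> {x. poly f x = 0}" using t(1) by simp
  qed
  ultimately show False using poly_roots_finite[OF assms(2)] finite_subset by blast
qed

lemma hsubst_prod_linear:
  assumes det: "\<alpha> * \<delta> - \<beta> * \<gamma> \<noteq> 0" and L: "\<And>i. i < K \<Longrightarrow> degree (L i) \<le> 1"
    and g: "degree g \<le> n - K" and K: "K \<le> n"
  shows "hsubst \<alpha> \<beta> \<gamma> \<delta> n ((\<Prod>i<K. L i) * g)
    = (\<Prod>i<K. hsubst \<alpha> \<beta> \<gamma> \<delta> 1 (L i)) * hsubst \<alpha> \<beta> \<gamma> \<delta> (n - K) g"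
proof (rule poly_eq_cofinite[OF finite_pole_set[OF det]])
  fix t assume t: "t \<notin> {t. \<gamma> * t + \<delta> = 0}"
  let ?D = "\<gamma> * t + \<delta>" and ?x = "(\<alpha> * t + \<beta>) / (\<gamma> * t + \<delta>)"
  have "degree (\<Prod>i<K. L i) \<le> (\<Sum>i<K. degree (L i))" by (rule degree_prod_sum_le[simplified]) simp
  also have "\<dots> \<le> K" using sum_mono[of "{..<K}" "\<lambda>i. degree (L i)" "\<lambda>_. 1"] L by simp
  finally have "degree ((\<Prod>i<K. L i) * g) \<le> n"
    using degree_mult_le[of "\<Prod>i<K. L i" g] g K by linarith
  then have "poly (hsubst \<alpha> \<beta> \<gamma> \<delta> n ((\<Prod>i<K. L i) * g)) t
      = ?D ^ K * ?D ^ (n - K) * ((\<Prod>i<K. poly (L i) ?x) * poly g ?x)"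
    using poly_hsubst[of _ n \<gamma> t \<delta>] t K by (simp add: poly_prod flip: power_add)
  also have "\<dots> = (\<Prod>i<K. ?D * poly (L i) ?x) * (?D ^ (n - K) * poly g ?x)"
    by (simp add: prod.distrib)
  also have "\<dots> = poly ((\<Prod>i<K. hsubst \<alpha> \<beta> \<gamma> \<delta> 1 (L i)) * hsubst \<alpha> \<beta> \<gamma> \<delta> (n - K) g) t"
    using poly_hsubst[OF L, of _ \<gamma> t \<delta>] poly_hsubst[OF g, of \<gamma> t \<delta>] t by (simp add: poly_prod)
  finally show "poly (hsubst \<alpha> \<beta> \<gamma> \<delta> n ((\<Prod>i<K. L i) * g)) t
      = poly ((\<Prod>i<K. hsubst \<alpha> \<beta> \<gamma> \<delta> 1 (L i)) * hsubst \<alpha> \<beta> \<gamma> \<delta> (n - K) g) t" .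
qed

text \<open>Invertible substitutions carry linear factors to linear factors, so they cannot decrease
  the projective root count (in fact they preserve it).\<close>
lemma proj_root_count_hsubst:
  assumes det: "\<alpha> * \<delta> - \<beta> * \<gamma> \<noteq> 0" and f: "f \<noteq> 0" "degree f \<le> n"
  shows "proj_root_count n f \<le> proj_root_count n (hsubst \<alpha> \<beta> \<gamma> \<delta> n f)"
proof -
  define K where "K = proj_root_count n f"
  obtain L g where L: "\<And>i. i < K \<Longrightarrow> L i \<noteq> 0 \<and> degree (L i) \<le> 1"
    and g: "degree g \<le> n - K" and fg: "f = (\<Prod>i<K. L i) * g"
    using proj_root_count_factorization[OF f] unfolding K_def by blast
  have K: "K \<le> n" unfolding K_def using proj_root_count_le[OF f] .
  have "hsubst \<alpha> \<beta> \<gamma> \<delta> n f = (\<Prod>i<K. hsubst \<alpha> \<beta> \<gamma> \<delta> 1 (L i)) * hsubst \<alpha> \<beta> \<gamma> \<delta> (n - K) g"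
    using hsubst_prod_linear[OF det _ g K, of L] L fg by auto
  then show ?thesis unfolding K_def[symmetric]
  proof (rule linear_factors_le_proj_root_count[OF hsubst_nonzero[OF det f]])
    show "\<And>i. i < K \<Longrightarrow> hsubst \<alpha> \<beta> \<gamma> \<delta> 1 (L i) \<noteq> 0 \<and> degree (hsubst \<alpha> \<beta> \<gamma> \<delta> 1 (L i)) \<le> 1"
      using hsubst_nonzero[OF det] degree_hsubst L by blast
  qed (use K degree_hsubst in auto)
qed


section \<open>Sign changes\<close>

text \<open>Sign changes between consecutive entries; for lists without zeros this agrees with
  sign_changes.\<close>
fun changes :: "real list \<Rightarrow> nat" where
  "changes (x # y # ys) = (if x * y < 0 then 1 else 0) + changes (y # ys)"
| "changes _ = 0"

lemma card_change_positions:
  "card {i. Suc i < length xs \<and> xs ! i * xs ! Suc i < 0} = changes xs"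
proof (induction xs rule: changes.induct)
  case (1 x y ys)
  let ?C = "\<lambda>xs. {i. Suc i < length xs \<and> xs ! i * xs ! Suc i < 0}"
  have fin: "finite (?C (y # ys))" by (rule finite_subset[of _ "{..<length (y # ys)}"]) auto
  have "?C (x # y # ys) = (if x * y < 0 then {0} else {}) \<union> Suc ` ?C (y # ys)"
  proof (rule set_eqI)
    fix i
    show "i \<in> ?C (x # y # ys) \<longleftrightarrow> i \<in> (if x * y < 0 then {0} else {}) \<union> Suc ` ?C (y # ys)"
      by (cases i) auto
  qed
  then have "card (?C (x # y # ys)) = (if x * y < 0 then 1 else 0) + card (Suc ` ?C (y # ys))"
    using fin by (auto simp: card_insert_if)
  then show ?case using 1 by (simp add: card_image)
qed simp_all

lemma sign_changes_eq_changes: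
  assumes "\<forall>x\<in>set xs. x \<noteq> 0"
  shows "sign_changes xs = changes xs"
proof -
  have "filter (\<lambda>x. x \<noteq> 0) xs = xs" using assms by (simp add: filter_id_conv)
  then show ?thesis unfolding sign_changes_def Let_def using card_change_positions by simp
qed

lemma changes_pos_ex: "1 \<le> changes xs \<Longrightarrow> \<exists>i. Suc i < length xs \<and> xs ! i * xs ! Suc i < 0"
  using card_change_positions[of xs] by (metis (mono_tags) card.empty empty_Collect_eq not_one_le_zero)

lemma changes_append:
  "A \<noteq> [] \<Longrightarrow> B \<noteq> [] \<Longrightarrow>
    changes (A @ B) = changes A + (if last A * hd B < 0 then 1 else 0) + changes B"
proof (induction A rule: changes.induct)
  case ("2_2" v)
  then show ?case by (cases B) auto
qed simp_all

lemma changes_Cons: "B \<noteq> [] \<Longrightarrow> changes (x # B) = (if x * hd B < 0 then 1 else 0) + changes B"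
  by (cases B) auto

text \<open>Two lists whose entries have pairwise equal (s > 0) or pairwise opposite (s < 0) signs
  have the same number of sign changes.\<close>
lemma changes_sign_related:
  "list_all2 (\<lambda>x y. 0 < s * (x * y)) xs ys \<Longrightarrow> changes xs = changes ys"
proof (induction xs arbitrary: ys rule: changes.induct)
  case (1 x y zs)
  then obtain x' y' ws where ys: "ys = x' # y' # ws" by (metis list_all2_Cons1)
  have "0 < (s * (x * x')) * (s * (y * y'))" using 1(2) ys by (auto intro: mult_pos_pos)
  then have "0 < (s * s) * ((x * y) * (x' * y'))" by (simp add: algebra_simps)
  then have "(x * y < 0) = (x' * y' < 0)"
    by (auto simp: zero_less_mult_iff mult_less_0_iff)
  moreover have "changes (y # zs) = changes (y' # ws)" using 1 ys by auto
  ultimately show ?case using ys by simp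
next
  case ("2_2" v)
  then show ?case by (cases ys) auto
qed simp

lemma changes_parity:
  "\<forall>x\<in>set xs. x \<noteq> 0 \<Longrightarrow> xs \<noteq> [] \<Longrightarrow> even (changes xs) = (0 < hd xs * last xs)"
proof (induction xs rule: changes.induct)
  case (1 x y ys)
  have "even (changes (y # ys)) = (0 < y * last (y # ys))" using 1 by auto
  moreover have "x \<noteq> 0" "y \<noteq> 0" "last (y # ys) \<noteq> 0" using 1(2) by auto
  ultimately show ?case by (auto simp: zero_less_mult_iff mult_less_0_iff)
next
  case ("2_2" v)
  then show ?case by (auto simp: zero_less_mult_iff linorder_neq_iff)
qed simp

lemma changes_zero:
  "\<forall>x\<in>set xs. x \<noteq> 0 \<Longrightarrow> changes xs = 0 \<Longrightarrow> \<forall>z\<in>set xs. 0 < hd xs * z"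
proof (induction xs rule: changes.induct)
  case (1 x y ys)
  have ih: "\<forall>z\<in>set (y # ys). 0 < y * z" using 1 by (simp split: if_splits)
  have "x * y \<noteq> 0" "\<not> x * y < 0" using 1(2,3) by (auto split: if_splits)
  then have xy: "0 < x * y" by linarith
  have "0 < x * z" if "z \<in> set (y # ys)" for z
  proof -
    have "0 < y * z" using ih that by blast
    with xy have "0 < (x * y) * (y * z)" by (rule mult_pos_pos)
    then have "0 < (y * y) * (x * z)" by (simp add: algebra_simps)
    then show ?thesis by (simp add: zero_less_mult_iff)
  qed
  moreover have "0 < x * x" using 1(2) by (auto simp: zero_less_mult_iff linorder_neq_iff)
  ultimately show ?case by simp
next
  case ("2_2" v)
  then show ?case by (auto simp: zero_less_mult_iff linorder_neq_iff)
qed simp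


definition cyclic_seq :: "nat \<Rightarrow> nat \<Rightarrow> (nat \<Rightarrow> real) \<Rightarrow> real list" where
  "cyclic_seq n r \<mu> = map \<mu> [1..<r+1] @ [(-1) ^ n * \<mu> 1]"

lemma cyclic_seq_nonzero:
  "\<forall>k. 1 \<le> k \<and> k \<le> r \<longrightarrow> \<mu> k \<noteq> 0 \<Longrightarrow> 1 \<le> r \<Longrightarrow> \<forall>x\<in>set (cyclic_seq n r \<mu>). x \<noteq> 0"
  unfolding cyclic_seq_def by auto

lemma hd_cyclic_seq: "1 \<le> r \<Longrightarrow> hd (cyclic_seq n r \<mu>) = \<mu> 1"
  unfolding cyclic_seq_def by (simp add: hd_append hd_map upt_rec)

lemma cyclic_seq_parity:
  assumes "\<forall>k. 1 \<le> k \<and> k \<le> r \<longrightarrow> \<mu> k \<noteq> 0" "1 \<le> r"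
  shows "even (changes (cyclic_seq n r \<mu>)) = even n"
proof -
  have "even (changes (cyclic_seq n r \<mu>)) = (0 < \<mu> 1 * ((-1) ^ n * \<mu> 1))"
    using changes_parity[OF cyclic_seq_nonzero[OF assms]] hd_cyclic_seq[OF assms(2)]
    unfolding cyclic_seq_def by simp
  also have "\<dots> = even n"
  proof -
    have "0 < \<mu> 1 * \<mu> 1" using assms by (auto simp: zero_less_mult_iff linorder_neq_iff)
    then show ?thesis
      by (cases "even n") (auto simp: mult.left_commute zero_less_mult_iff)
  qed
  finally show ?thesis .
qed

lemma cyclic_seq_no_changes:
  assumes "\<forall>k. 1 \<le> k \<and> k \<le> r \<longrightarrow> \<mu> k \<noteq> 0" "1 \<le> r" "changes (cyclic_seq n r \<mu>) = 0"
  shows "even n" "\<forall>k. 1 \<le> k \<and> k \<le> r \<longrightarrow> 0 < \<mu> 1 * \<mu> k"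
proof -
  note pos = changes_zero[OF cyclic_seq_nonzero[OF assms(1,2)] assms(3),
      unfolded hd_cyclic_seq[OF assms(2)]]
  then have "0 < \<mu> 1 * ((-1) ^ n * \<mu> 1)" unfolding cyclic_seq_def by auto
  then show "even n" by (cases "even n") (auto simp: zero_less_mult_iff mult_less_0_iff)
  show "\<forall>k. 1 \<le> k \<and> k \<le> r \<longrightarrow> 0 < \<mu> 1 * \<mu> k" using pos unfolding cyclic_seq_def by auto
qed

lemma cyclic_seq_change_at:
  assumes "2 \<le> r" "1 \<le> changes (cyclic_seq n r \<mu>)"
  obtains j where "2 \<le> j" "j \<le> r"
    "\<mu> (j - 1) * \<mu> j < 0 \<or> \<mu> j * (if j < r then \<mu> (j + 1) else (-1) ^ n * \<mu> 1) < 0"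
proof -
  obtain i where i: "Suc i < length (cyclic_seq n r \<mu>)"
    "cyclic_seq n r \<mu> ! i * cyclic_seq n r \<mu> ! Suc i < 0"
    using changes_pos_ex[OF assms(2)] by auto
  have len: "length (cyclic_seq n r \<mu>) = r + 1" unfolding cyclic_seq_def by simp
  have nth: "cyclic_seq n r \<mu> ! k = (if k < r then \<mu> (k + 1) else (-1) ^ n * \<mu> 1)"
    if "k \<le> r" for k
    using that unfolding cyclic_seq_def by (auto simp: nth_append simp del: upt_Suc)
  show ?thesis
  proof (cases "Suc i < r")
    case True
    then show ?thesis using i nth[of i] nth[of "Suc i"] that[of "i + 2"] by auto
  next
    case False
    then have "Suc i = r" using i len by simp
    then show ?thesis using i nth[of i] nth[of "Suc i"] assms(1) that[of r] by auto
  qed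
qed

lemma list_all2_map_upt:
  "(\<And>k. m \<le> k \<Longrightarrow> k < n \<Longrightarrow> P (f k) (g k)) \<Longrightarrow> list_all2 P (map f [m..<n]) (map g [m..<n])"
  by (auto simp: list_all2_conv_all_nth)

lemma list_all2_last_hd:
  assumes "list_all2 P xs ys" "xs \<noteq> []"
  shows "P (last xs) (last ys)" "P (hd xs) (hd ys)"
proof -
  have l: "length xs = length ys" "\<forall>i<length xs. P (xs ! i) (ys ! i)"
    using assms(1) by (auto simp: list_all2_conv_all_nth)
  moreover have "ys \<noteq> []" using l assms(2) by auto
  ultimately show "P (last xs) (last ys)" "P (hd xs) (hd ys)"
    using assms(2) by (simp_all add: last_conv_nth hd_conv_nth)
qed

text \<open>Flipping the signs of the first block does not change its internal sign changes,
  and the two junctions around mu_j, at least one of which is a change, become one junction.\<close>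
lemma cyclic_seq_delete:
  assumes j: "2 \<le> j" "j \<le> r" and n: "1 \<le> n"
    and below: "\<forall>k. 1 \<le> k \<and> k < j \<longrightarrow> \<nu> k * \<mu> k < 0"
    and above: "\<forall>k. j \<le> k \<and> k < r \<longrightarrow> 0 < \<nu> k * \<mu> (k + 1)"
    and change: "\<mu> (j - 1) * \<mu> j < 0 \<or> \<mu> j * (if j < r then \<mu> (j + 1) else (-1) ^ n * \<mu> 1) < 0"
  shows "changes (cyclic_seq (n - 1) (r - 1) \<nu>) \<le> changes (cyclic_seq n r \<mu>)"
proof -
  define e where "e = (-1) ^ n * \<mu> 1"
  define A where "A = map \<mu> [1..<j]"
  define B where "B = map \<mu> [Suc j..<r+1] @ [e]"
  define A' where "A' = map \<nu> [1..<j]"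
  define B' where "B' = map \<nu> [j..<r] @ [(-1) ^ (n - 1) * \<nu> 1]"
  have "[1..<r+1] = [1..<j] @ j # [Suc j..<r+1]"
    using j upt_add_eq_append[of 1 j "r + 1 - j"] upt_conv_Cons[of j "r+1"] by simp
  then have split: "cyclic_seq n r \<mu> = A @ (\<mu> j # B)"
    unfolding cyclic_seq_def A_def B_def e_def by simp
  have "[1..<r - 1 + 1] = [1..<j] @ [j..<r]"
    using j upt_add_eq_append[of 1 j "r - j"] by simp
  then have split': "cyclic_seq (n - 1) (r - 1) \<nu> = A' @ B'"
    unfolding cyclic_seq_def A'_def B'_def by simp
  have ne: "A \<noteq> []" "A' \<noteq> []" "B \<noteq> []" "B' \<noteq> []" using j by (auto simp: A_def A'_def B_def B'_def)
  have relA: "list_all2 (\<lambda>x y. 0 < (-1) * (x * y)) A' A"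
    unfolding A'_def A_def by (rule list_all2_map_upt) (use below in \<open>auto simp: mult.commute\<close>)
  have "0 < ((-1::real) ^ (n - 1) * (-1) ^ n) * (\<nu> 1 * \<mu> 1)"
    using n below j by (cases n) (auto simp: power_mult_distrib[symmetric])
  then have "0 < 1 * ((-1) ^ (n - 1) * \<nu> 1 * e)" unfolding e_def by (simp add: algebra_simps)
  moreover have "B = map (\<lambda>k. \<mu> (k + 1)) [j..<r] @ [e]"
    unfolding B_def by (simp add: map_Suc_upt[symmetric] comp_def del: upt_Suc)
  ultimately have relB: "list_all2 (\<lambda>x y. 0 < 1 * (x * y)) B' B"
    unfolding B'_def
    by (simp only:, intro list_all2_appendI list_all2_map_upt) (use above in auto)
  have "last A = \<mu> (j - 1)" unfolding A_def using j by (simp add: last_map)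
  moreover have "hd B = (if j < r then \<mu> (j + 1) else e)"
    unfolding B_def by (cases "j < r") (auto simp: upt_conv_Cons simp del: upt_Suc)
  moreover have "0 < (-1) * (last A' * last A)" "0 < 1 * (hd B' * hd B)"
    using list_all2_last_hd[OF relA ne(2)] list_all2_last_hd[OF relB ne(4)] by auto
  ultimately have junction: "(if last A' * hd B' < 0 then 1 else 0)
      \<le> (if last A * \<mu> j < 0 then 1 else 0) + (if \<mu> j * hd B < 0 then 1 else (0::nat))"
    using change unfolding e_def by (auto simp: zero_less_mult_iff mult_less_0_iff)
  have "changes (cyclic_seq (n - 1) (r - 1) \<nu>)
      = changes A' + (if last A' * hd B' < 0 then 1 else 0) + changes B'"
    unfolding split' using ne by (simp add: changes_append)
  moreover have "changes (cyclic_seq n r \<mu>) = changes A + (if last A * \<mu> j < 0 then 1 else 0)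
      + ((if \<mu> j * hd B < 0 then 1 else 0) + changes B)"
    unfolding split using ne by (simp add: changes_append changes_Cons)
  moreover have "changes A' = changes A" "changes B' = changes B"
    using changes_sign_related[OF relA] changes_sign_related[OF relB] by auto
  ultimately show ?thesis using junction by linarith
qed


section \<open>Power sums of linear forms\<close>

definition psum :: "nat \<Rightarrow> nat set \<Rightarrow> (nat \<Rightarrow> real) \<Rightarrow> (nat \<Rightarrow> real) \<Rightarrow> (nat \<Rightarrow> real) \<Rightarrow> real poly" where
  "psum n A \<mu> a b = (\<Sum>k\<in>A. smult (\<mu> k) ([:b k, a k:] ^ n))"

definition cross :: "(nat \<Rightarrow> real) \<Rightarrow> (nat \<Rightarrow> real) \<Rightarrow> nat \<Rightarrow> nat \<Rightarrow> real" where
  "cross a b i k = a i * b k - a k * b i"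

text \<open>Nonzero coefficients and nonzero vectors (a_k, b_k), k = 1..r, strictly ordered clockwise
  within a half-turn.\<close>
definition ordered_config :: "nat \<Rightarrow> (nat \<Rightarrow> real) \<Rightarrow> (nat \<Rightarrow> real) \<Rightarrow> (nat \<Rightarrow> real) \<Rightarrow> bool" where
  "ordered_config r a b \<mu> \<longleftrightarrow> (\<forall>k. 1 \<le> k \<and> k \<le> r \<longrightarrow> \<mu> k \<noteq> 0 \<and> (a k \<noteq> 0 \<or> b k \<noteq> 0)) \<and>
     (\<forall>i k. 1 \<le> i \<and> i < k \<and> k \<le> r \<longrightarrow> cross a b i k < 0)"

lemma cross_linear_image:
  "cross (\<lambda>k. a k * \<alpha> + b k * \<gamma>) (\<lambda>k. a k * \<beta> + b k * \<delta>) i k = (\<alpha> * \<delta> - \<beta> * \<gamma>) * cross a b i k"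
  unfolding cross_def by (simp add: algebra_simps)

lemma degree_psum: "degree (psum n A \<mu> a b) \<le> n"
  unfolding psum_def
proof (induction A rule: infinite_finite_induct)
  case (insert x F)
  then show ?case using degree_linear_power[of "b x" "a x" n]
    by (simp add: degree_add_le order.trans[OF degree_smult_le])
qed auto

lemma poly_psum: "poly (psum n A \<mu> a b) t = (\<Sum>k\<in>A. \<mu> k * (a k * t + b k) ^ n)"
  unfolding psum_def by (simp add: poly_sum algebra_simps)

lemma coeff_linear_power: "coeff ([:b, a:] ^ n) n = a ^ n"
proof (induction n)
  case (Suc n)
  have "coeff ([:b, a:] ^ n) (Suc n) = 0"
    using degree_linear_power[of b a n] by (simp add: coeff_eq_0)
  moreover have "[:b, a:] ^ Suc n = smult b ([:b, a:] ^ n) + pCons 0 (smult a ([:b, a:] ^ n))"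
    by (simp add: mult_pCons_right mult.commute)
  ultimately show ?case using Suc by simp
qed simp

lemma coeff_psum: "coeff (psum n A \<mu> a b) n = (\<Sum>k\<in>A. \<mu> k * a k ^ n)"
  unfolding psum_def by (simp add: coeff_sum coeff_linear_power)

lemma pderiv_psum:
  assumes "1 \<le> n"
  shows "pderiv (psum n A \<mu> a b) = psum (n - 1) A (\<lambda>k. \<mu> k * of_nat n * a k) a b"
  unfolding psum_def higher_pderiv_sum[of 1, simplified]
proof (rule sum.cong)
  fix k
  have "pderiv [:b k, a k:] = [:a k:]" by (simp add: pderiv_pCons)
  then show "pderiv (smult (\<mu> k) ([:b k, a k:] ^ n))
      = smult (\<mu> k * of_nat n * a k) ([:b k, a k:] ^ (n - 1))"
    by (simp add: pderiv_smult pderiv_power mult_ac)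
qed simp

lemma hsubst_psum:
  assumes det: "\<alpha> * \<delta> - \<beta> * \<gamma> \<noteq> 0"
  shows "hsubst \<alpha> \<beta> \<gamma> \<delta> n (psum n A \<mu> a b) =
    psum n A \<mu> (\<lambda>k. a k * \<alpha> + b k * \<gamma>) (\<lambda>k. a k * \<beta> + b k * \<delta>)"
proof (rule poly_eq_cofinite[OF finite_pole_set[OF det]])
  fix t assume t: "t \<notin> {t. \<gamma> * t + \<delta> = 0}"
  let ?D = "\<gamma> * t + \<delta>" and ?x = "(\<alpha> * t + \<beta>) / (\<gamma> * t + \<delta>)"
  have "poly (hsubst \<alpha> \<beta> \<gamma> \<delta> n (psum n A \<mu> a b)) t = ?D ^ n * poly (psum n A \<mu> a b) ?x"
    by (rule poly_hsubst[OF degree_psum]) (use t in simp)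
  also have "\<dots> = (\<Sum>k\<in>A. \<mu> k * (?D * (a k * ?x + b k)) ^ n)"
    by (simp only: poly_psum sum_distrib_left power_mult_distrib mult.left_commute)
  also have "\<dots> = (\<Sum>k\<in>A. \<mu> k * ((a k * \<alpha> + b k * \<gamma>) * t + (a k * \<beta> + b k * \<delta>)) ^ n)"
  proof (intro sum.cong refl)
    fix k
    have "?D * (a k * ?x + b k) = (a k * \<alpha> + b k * \<gamma>) * t + (a k * \<beta> + b k * \<delta>)"
      using t by (simp add: field_simps)
    then show "\<mu> k * (?D * (a k * ?x + b k)) ^ n
        = \<mu> k * ((a k * \<alpha> + b k * \<gamma>) * t + (a k * \<beta> + b k * \<delta>)) ^ n" by simp
  qed
  also have "\<dots> = poly (psum n A \<mu> (\<lambda>k. a k * \<alpha> + b k * \<gamma>) (\<lambda>k. a k * \<beta> + b k * \<delta>)) t"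
    by (simp only: poly_psum)
  finally show "poly (hsubst \<alpha> \<beta> \<gamma> \<delta> n (psum n A \<mu> a b)) t
      = poly (psum n A \<mu> (\<lambda>k. a k * \<alpha> + b k * \<gamma>) (\<lambda>k. a k * \<beta> + b k * \<delta>)) t" .
qed

definition skip :: "nat \<Rightarrow> nat \<Rightarrow> nat" where
  "skip j k = (if k < j then k else Suc k)"

lemma psum_delete_term:
  assumes "c j = 0" "1 \<le> j" "j \<le> r"
  shows "psum m {1..r} c a b = psum m {1..r-1} (c \<circ> skip j) (a \<circ> skip j) (b \<circ> skip j)"
proof -
  have "bij_betw (skip j) {1..r-1} ({1..r} - {j})"
    by (rule bij_betw_byWitness[where f' = "\<lambda>k. if k < j then k else k - 1"])
      (use assms(2,3) in \<open>auto simp: skip_def\<close>)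
  from sum.reindex_bij_betw[OF this, of "\<lambda>k. smult (c k) ([:b k, a k:] ^ m)"]
  have "psum m ({1..r} - {j}) c a b = psum m {1..r-1} (c \<circ> skip j) (a \<circ> skip j) (b \<circ> skip j)"
    unfolding psum_def by simp
  moreover have "psum m {1..r} c a b = psum m ({1..r} - {j}) c a b"
    unfolding psum_def by (rule sum.mono_neutral_right) (use assms(1) in auto)
  ultimately show ?thesis by simp
qed

lemma ordered_configD:
  assumes "ordered_config r a b \<mu>"
  shows "\<And>k. 1 \<le> k \<Longrightarrow> k \<le> r \<Longrightarrow> \<mu> k \<noteq> 0 \<and> (a k \<noteq> 0 \<or> b k \<noteq> 0)"
    and "\<And>i k. 1 \<le> i \<Longrightarrow> i < k \<Longrightarrow> k \<le> r \<Longrightarrow> cross a b i k < 0"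
  using assms unfolding ordered_config_def by auto

lemma even_power_sum_pos:
  fixes w x :: "nat \<Rightarrow> real"
  assumes "finite A" "k \<in> A" "x k \<noteq> 0" "even n" "\<And>i. i \<in> A \<Longrightarrow> 0 < w i"
  shows "0 < (\<Sum>i\<in>A. w i * x i ^ n)"
proof (rule sum_pos2[OF assms(1,2)])
  show "0 < w k * x k ^ n"
    using assms(2-5) by (simp add: zero_less_power_eq)
  show "0 \<le> w i * x i ^ n" if "i \<in> A" for i
    using assms(4) assms(5)[OF that] by (simp add: zero_le_even_power less_imp_le)
qed

text \<open>With all coefficients of one sign and n even, the power sum is definite: it has no real
  roots and full degree, hence no roots at all in the projective sense.\<close>
lemma psum_definite:
  assumes C: "ordered_config r a b \<mu>" and r: "2 \<le> r" and n: "even n"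
    and sign: "\<forall>k. 1 \<le> k \<and> k \<le> r \<longrightarrow> 0 < \<mu> 1 * \<mu> k"
  shows "psum n {1..r} \<mu> a b \<noteq> 0" "proj_root_count n (psum n {1..r} \<mu> a b) = 0"
proof -
  let ?F = "psum n {1..r} \<mu> a b"
  have cross12: "a 1 * b 2 - a 2 * b 1 \<noteq> 0"
    using ordered_configD(2)[OF C, of 1 2] r unfolding cross_def by simp
  have w: "\<And>k. k \<in> {1..r} \<Longrightarrow> 0 < \<mu> 1 * \<mu> k" using sign by auto
  have pos: "0 < \<mu> 1 * poly ?F t" for t
  proof -
    text \<open>The vectors 1 and 2 are independent, so one of the two linear forms is nonzero at t.\<close>
    obtain k where k: "k \<in> {1..r}" "a k * t + b k \<noteq> 0"
    proof (cases "a 1 * t + b 1 = 0")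
      case True
      have "a 2 * t + b 2 \<noteq> 0"
      proof
        assume "a 2 * t + b 2 = 0"
        with True have "b 1 = - (a 1 * t)" "b 2 = - (a 2 * t)" by linarith+
        then show False using cross12 by (simp add: algebra_simps)
      qed
      then show ?thesis using that[of 2] r by auto
    next
      case False
      then show ?thesis using that[of 1] r by auto
    qed
    from even_power_sum_pos[of "{1..r}" k "\<lambda>i. a i * t + b i", OF _ k n w]
    show ?thesis by (simp add: poly_psum sum_distrib_left mult.assoc)
  qed
  then show F: "?F \<noteq> 0" by (metis mult_zero_right poly_0 order.irrefl)
  have "{x. poly ?F x = 0} = {}" using pos by (metis (mono_tags) empty_Collect_eq less_irrefl mult_zero_right)
  then have "root_count ?F = 0" unfolding root_count_def by simp
  moreover have "0 < \<mu> 1 * coeff ?F n"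
  proof -
    obtain k where k: "k \<in> {1..r}" "a k \<noteq> 0"
    proof (cases "a 1 = 0")
      case True
      then show ?thesis using cross12 r that[of 2] by auto
    next
      case False
      then show ?thesis using r that[of 1] by auto
    qed
    from even_power_sum_pos[of "{1..r}" k a, OF _ k n w]
    show ?thesis by (simp add: coeff_psum sum_distrib_left mult.assoc)
  qed
  then have "coeff ?F n \<noteq> 0" by auto
  then have "degree ?F = n" using degree_psum[of n "{1..r}" \<mu> a b] le_degree by (metis le_antisym)
  ultimately show "proj_root_count n ?F = 0" unfolding proj_root_count_def by simp
qed

lemma cross_sign_relative:
  assumes C: "ordered_config r a b \<mu>" and j: "1 \<le> j" "j \<le> r"
  shows "1 \<le> k \<Longrightarrow> k < j \<Longrightarrow> cross a b k j < 0"
    and "j < k \<Longrightarrow> k \<le> r \<Longrightarrow> 0 < cross a b k j"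
  using ordered_configD(2)[OF C, of k j] ordered_configD(2)[OF C, of j k] j
  unfolding cross_def by auto

lemma sum_squares_pos: "(x::real) \<noteq> 0 \<or> y \<noteq> 0 \<Longrightarrow> 0 < x * x + y * y"
  by (metis power2_eq_square sum_power2_gt_zero_iff)

text \<open>Rotate all vectors so that vector j becomes (0, |v_j|^2), i.e. apply (x, y) ->
  (x b_j - y a_j, x a_j + y b_j); the first coordinate of vector k is then cross a b k j.
  Dropping vector j and multiplying the coefficients by n cross a b k j (as differentiation does)
  leaves an ordered configuration of r - 1 vectors.\<close>
lemma ordered_config_after_elimination:
  assumes C: "ordered_config r a b \<mu>" and j: "1 \<le> j" "j \<le> r" and n: "1 \<le> n"
  defines "a' \<equiv> \<lambda>k. cross a b k j" and "b' \<equiv> \<lambda>k. a k * a j + b k * b j"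
    and "c \<equiv> \<lambda>k. \<mu> k * of_nat n * cross a b k j"
  shows "ordered_config (r - 1) (a' \<circ> skip j) (b' \<circ> skip j) (c \<circ> skip j)"
proof -
  have skip_range: "1 \<le> skip j k \<and> skip j k \<le> r \<and> skip j k \<noteq> j" if "1 \<le> k" "k \<le> r - 1" for k
    using that j unfolding skip_def by auto
  have "(c \<circ> skip j) k \<noteq> 0 \<and> ((a' \<circ> skip j) k \<noteq> 0 \<or> (b' \<circ> skip j) k \<noteq> 0)"
    if k: "1 \<le> k" "k \<le> r - 1" for k
  proof -
    have "cross a b (skip j k) j \<noteq> 0"
      using skip_range[OF k] cross_sign_relative[OF C j] by (metis linorder_neq_iff less_irrefl)
    then show ?thesis using ordered_configD(1)[OF C, of "skip j k"] skip_range[OF k] n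
      unfolding a'_def c_def by auto
  qed
  moreover have "cross (a' \<circ> skip j) (b' \<circ> skip j) p q < 0"
    if pq: "1 \<le> p" "p < q" "q \<le> r - 1" for p q
  proof -
    have "skip j p < skip j q" using pq unfolding skip_def by auto
    then have "cross a b (skip j p) (skip j q) < 0"
      using ordered_configD(2)[OF C] skip_range pq by auto
    moreover have "a' = (\<lambda>k. a k * b j + b k * (- a j))"
      unfolding a'_def cross_def by (simp add: fun_eq_iff algebra_simps)
    then have "cross a' b' (skip j p) (skip j q)
        = (b j * b j - a j * - a j) * cross a b (skip j p) (skip j q)"
      unfolding b'_def by (simp only: cross_linear_image)
    moreover have "0 < b j * b j - a j * - a j"
      using sum_squares_pos[of "a j" "b j"] ordered_configD(1)[OF C j] by simp
    moreover have "cross (a' \<circ> skip j) (b' \<circ> skip j) p q = cross a' b' (skip j p) (skip j q)"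
      by (simp add: cross_def)
    ultimately show ?thesis by (simp add: mult_pos_neg)
  qed
  ultimately show ?thesis unfolding ordered_config_def by blast
qed

text \<open>The new coefficients have the sign of -mu_k before j and of mu_(k+1) from j on, so
  cyclic_seq_delete applies.\<close>
lemma coefficient_signs_after_elimination:
  assumes C: "ordered_config r a b \<mu>" and j: "1 \<le> j" "j \<le> r" and n: "1 \<le> n"
  defines "c \<equiv> \<lambda>k. \<mu> k * of_nat n * cross a b k j"
  shows "1 \<le> k \<Longrightarrow> k < j \<Longrightarrow> (c \<circ> skip j) k * \<mu> k < 0"
    and "j \<le> k \<Longrightarrow> k < r \<Longrightarrow> 0 < (c \<circ> skip j) k * \<mu> (k + 1)"
proof -
  have sq: "0 < \<mu> k * \<mu> k" if "1 \<le> k" "k \<le> r" for k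
    using ordered_configD(1)[OF C that] by (auto simp: zero_less_mult_iff linorder_neq_iff)
  show "(c \<circ> skip j) k * \<mu> k < 0" if k: "1 \<le> k" "k < j"
  proof -
    have "(c \<circ> skip j) k * \<mu> k = (\<mu> k * \<mu> k) * (of_nat n * cross a b k j)"
      using k unfolding c_def skip_def by (simp add: algebra_simps)
    moreover have "of_nat n * cross a b k j < 0"
      using cross_sign_relative(1)[OF C j k] n by (simp add: mult_pos_neg)
    moreover have "0 < \<mu> k * \<mu> k" using sq k j by simp
    ultimately show ?thesis by (metis mult_pos_neg)
  qed
  show "0 < (c \<circ> skip j) k * \<mu> (k + 1)" if k: "j \<le> k" "k < r"
  proof -
    have "(c \<circ> skip j) k * \<mu> (k + 1) = (\<mu> (k + 1) * \<mu> (k + 1)) * (of_nat n * cross a b (k + 1) j)"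
      using k unfolding c_def skip_def by (simp add: algebra_simps)
    moreover have "0 < of_nat n * cross a b (k + 1) j"
      using cross_sign_relative(2)[OF C j, of "k + 1"] k n by simp
    moreover have "0 < \<mu> (k + 1) * \<mu> (k + 1)" using sq k j by simp
    ultimately show ?thesis by (metis mult_pos_pos)
  qed
qed

lemma eliminate_term:
  assumes C: "ordered_config r a b \<mu>" and j: "1 \<le> j" "j \<le> r" and n: "1 \<le> n"
  obtains \<alpha> \<beta> \<gamma> \<delta> \<nu> a' b' where "\<alpha> * \<delta> - \<beta> * \<gamma> \<noteq> 0" "ordered_config (r - 1) a' b' \<nu>"
    "pderiv (hsubst \<alpha> \<beta> \<gamma> \<delta> n (psum n {1..r} \<mu> a b)) = psum (n - 1) {1..r-1} \<nu> a' b'"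
    "\<forall>k. 1 \<le> k \<and> k < j \<longrightarrow> \<nu> k * \<mu> k < 0" "\<forall>k. j \<le> k \<and> k < r \<longrightarrow> 0 < \<nu> k * \<mu> (k + 1)"
proof -
  define a' where "a' = (\<lambda>k. cross a b k j)"
  define b' where "b' = (\<lambda>k. a k * a j + b k * b j)"
  define c where "c = (\<lambda>k. \<mu> k * of_nat n * cross a b k j)"
  have "0 < a j * a j + b j * b j"
    using sum_squares_pos[of "a j" "b j"] ordered_configD(1)[OF C j] by blast
  then have det: "b j * b j - a j * (- a j) \<noteq> 0" by linarith
  have "a' = (\<lambda>k. a k * b j + b k * (- a j))"
    unfolding a'_def cross_def by (simp add: fun_eq_iff algebra_simps)
  then have "hsubst (b j) (a j) (- a j) (b j) n (psum n {1..r} \<mu> a b) = psum n {1..r} \<mu> a' b'"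
    unfolding b'_def using hsubst_psum[OF det] by simp
  moreover have "pderiv (psum n {1..r} \<mu> a' b') = psum (n - 1) {1..r} c a' b'"
    unfolding c_def a'_def by (rule pderiv_psum[OF n])
  moreover have "\<dots> = psum (n - 1) {1..r-1} (c \<circ> skip j) (a' \<circ> skip j) (b' \<circ> skip j)"
    by (rule psum_delete_term[OF _ j]) (simp add: c_def cross_def)
  ultimately show ?thesis
    using that[OF det ordered_config_after_elimination[OF C j n, folded a'_def b'_def c_def]]
      coefficient_signs_after_elimination[OF C j n, folded c_def]
    by simp
qed

lemma hsubst_zero: "hsubst \<alpha> \<beta> \<gamma> \<delta> m 0 = 0"
  by (simp add: hsubst_def)

text \<open>At a cyclic sign change one term can be eliminated by substitution and
  differentiation: the cyclic sign changes do not increase, a vanishing sum stays vanishing, and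
  by substitution invariance and Rolle the projective root count drops by at most one.\<close>
lemma reduction_step:
  assumes C: "ordered_config r a b \<mu>" and r: "2 \<le> r" and n: "1 \<le> n"
    and change: "1 \<le> changes (cyclic_seq n r \<mu>)"
  obtains \<nu> a' b' where "ordered_config (r - 1) a' b' \<nu>"
    "changes (cyclic_seq (n - 1) (r - 1) \<nu>) \<le> changes (cyclic_seq n r \<mu>)"
    "psum n {1..r} \<mu> a b = 0 \<Longrightarrow> psum (n - 1) {1..r-1} \<nu> a' b' = 0"
    "psum n {1..r} \<mu> a b \<noteq> 0 \<Longrightarrow> psum (n - 1) {1..r-1} \<nu> a' b' \<noteq> 0 \<Longrightarrow>
      proj_root_count n (psum n {1..r} \<mu> a b)
        \<le> proj_root_count (n - 1) (psum (n - 1) {1..r-1} \<nu> a' b') + 1"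
proof -
  let ?F = "psum n {1..r} \<mu> a b"
  obtain j where j: "2 \<le> j" "j \<le> r"
    "\<mu> (j - 1) * \<mu> j < 0 \<or> \<mu> j * (if j < r then \<mu> (j + 1) else (-1) ^ n * \<mu> 1) < 0"
    using cyclic_seq_change_at[OF r change] by blast
  obtain \<alpha> \<beta> \<gamma> \<delta> \<nu> a' b' where det: "\<alpha> * \<delta> - \<beta> * \<gamma> \<noteq> 0" and C': "ordered_config (r - 1) a' b' \<nu>"
    and deriv: "pderiv (hsubst \<alpha> \<beta> \<gamma> \<delta> n ?F) = psum (n - 1) {1..r-1} \<nu> a' b'"
    and signs: "\<forall>k. 1 \<le> k \<and> k < j \<longrightarrow> \<nu> k * \<mu> k < 0" "\<forall>k. j \<le> k \<and> k < r \<longrightarrow> 0 < \<nu> k * \<mu> (k + 1)"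
    by (rule eliminate_term[OF C _ j(2) n]) (use j(1) in auto)
  let ?G = "hsubst \<alpha> \<beta> \<gamma> \<delta> n ?F"
  have zero: "psum (n - 1) {1..r-1} \<nu> a' b' = 0" if "?F = 0"
    using deriv that by (simp add: hsubst_zero)
  have bound: "proj_root_count n ?F \<le> proj_root_count (n - 1) (psum (n - 1) {1..r-1} \<nu> a' b') + 1"
    if F: "?F \<noteq> 0" and H: "psum (n - 1) {1..r-1} \<nu> a' b' \<noteq> 0"
  proof -
    have "proj_root_count n ?F \<le> proj_root_count n ?G"
      by (rule proj_root_count_hsubst[OF det F degree_psum])
    moreover have "proj_root_count n ?G \<le> proj_root_count (n - 1) (pderiv ?G) + 1"
      by (rule proj_root_count_pderiv[OF hsubst_nonzero[OF det F degree_psum] degree_hsubst])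
        (use deriv H in simp)
    ultimately show ?thesis unfolding deriv by simp
  qed
  show ?thesis by (rule that[OF C' cyclic_seq_delete[OF j(1,2) n signs j(3)] zero bound])
qed


section \<open>The bound for power sums\<close>

text \<open>Its derivative
  vanishes only where a_1 t + b_1 = 0, which is not a root, so all roots are simple; by Rolle
  there are at most two of them, and there is no root at infinity.\<close>
lemma two_term_proj_root_count:
  assumes a: "a 1 \<noteq> 0" "a 2 = 0" and b: "b 2 \<noteq> 0" and \<mu>: "\<mu> 1 \<noteq> 0" "\<mu> 2 \<noteq> 0" and n: "1 \<le> n"
  shows "proj_root_count n (psum n {1..2} \<mu> a b) \<le> 2"
proof -
  let ?G = "psum n {1..2} \<mu> a b"
  have sum12: "(\<Sum>k\<in>{1..2::nat}. f k) = f 1 + f 2" for f :: "nat \<Rightarrow> real"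
    by (simp add: numeral_2_eq_2)
  have pG: "poly ?G x = \<mu> 1 * (a 1 * x + b 1) ^ n + \<mu> 2 * b 2 ^ n" for x
    unfolding poly_psum sum12 using a by simp
  have dG: "pderiv ?G = psum (n - 1) {1..2} (\<lambda>k. \<mu> k * of_nat n * a k) a b"
    by (rule pderiv_psum[OF n])
  have pdG: "poly (pderiv ?G) x = \<mu> 1 * of_nat n * a 1 * (a 1 * x + b 1) ^ (n - 1)" for x
    unfolding dG poly_psum sum12 using a by simp
  have "coeff ?G n = \<mu> 1 * a 1 ^ n" unfolding coeff_psum sum12 using a n by simp
  then have "coeff ?G n \<noteq> 0" using a \<mu> by simp
  then have G: "?G \<noteq> 0" and degree: "degree ?G = n"
    using degree_psum[of n "{1..2}" \<mu> a b] le_degree by (auto intro: antisym)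
  let ?R = "{x. poly ?G x = 0}"
  have simple: "order x ?G = 1" if "x \<in> ?R" for x
  proof -
    have "a 1 * x + b 1 \<noteq> 0" using that pG[of x] n b \<mu> by (auto simp: power_0_left)
    then have "poly (pderiv ?G) x \<noteq> 0" using pdG[of x] a \<mu> n by simp
    then have "order x (pderiv ?G) = 0" by (rule order_0I)
    then show ?thesis using order_pderiv[OF G, of x] that by simp
  qed
  have "card ?R \<le> 2"
  proof (cases "?R = {}")
    case False
    obtain Y where Y: "card ?R \<le> card Y + 1" "\<forall>y\<in>Y. poly (pderiv ?G) y = 0"
      using rolle_roots[OF poly_roots_finite[OF G] False, of ?G] by auto
    have "Y \<subseteq> {- b 1 / a 1}"
    proof
      fix y assume "y \<in> Y"
      then have "(a 1 * y + b 1) ^ (n - 1) = 0" using Y(2) pdG[of y] a \<mu> n by simp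
      then show "y \<in> {- b 1 / a 1}" using a by (simp add: field_simps)
    qed
    then have "card Y \<le> 1" using card_mono[of "{- b 1 / a 1}" Y] by simp
    then show ?thesis using Y(1) by simp
  qed simp
  then show ?thesis unfolding proj_root_count_def root_count_def using simple degree by simp
qed

text \<open>Any two ordered terms reduce to the previous case by rotating the second vector onto the
  positive y-axis.\<close>
lemma two_terms_bound:
  assumes C: "ordered_config 2 a b \<mu>" and n: "1 \<le> n" and F: "psum n {1..2} \<mu> a b \<noteq> 0"
  shows "proj_root_count n (psum n {1..2} \<mu> a b) \<le> 2"
proof -
  define a' where "a' = (\<lambda>k. a k * b 2 + b k * (- a 2))"
  define b' where "b' = (\<lambda>k. a k * a 2 + b k * b 2)"
  note nzC = ordered_configD(1)[OF C]
  have "0 < a 2 * a 2 + b 2 * b 2" using sum_squares_pos nzC[of 2] by simp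
  then have det: "b 2 * b 2 - a 2 * (- a 2) \<noteq> 0" and b'2: "b' 2 \<noteq> 0"
    unfolding b'_def by linarith+
  have "a' 1 = cross a b 1 2" unfolding a'_def cross_def by (simp add: algebra_simps)
  then have "a' 1 \<noteq> 0" using ordered_configD(2)[OF C, of 1 2] by simp
  moreover have "a' 2 = 0" unfolding a'_def by simp
  moreover have "\<mu> 1 \<noteq> 0" "\<mu> 2 \<noteq> 0" using nzC[of 1] nzC[of 2] by auto
  ultimately have "proj_root_count n (psum n {1..2} \<mu> a' b') \<le> 2"
    using two_term_proj_root_count[of a' b' \<mu> n] b'2 n by blast
  moreover have "hsubst (b 2) (a 2) (- a 2) (b 2) n (psum n {1..2} \<mu> a b) = psum n {1..2} \<mu> a' b'"
    unfolding a'_def b'_def by (rule hsubst_psum[OF det])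
  ultimately show ?thesis using proj_root_count_hsubst[OF det F degree_psum] by simp
qed

text \<open>The parity argument closing both inductions.\<close>
lemma le_by_parity: "even (s::nat) = even z \<Longrightarrow> z \<le> s + 1 \<Longrightarrow> z \<le> s"
  by presburger

text \<open>A vanishing power sum of an ordered configuration has at least n + 2 cyclic sign changes.
  Proved by the same elimination: differentiation keeps it vanishing.\<close>
lemma vanishing_psum_changes:
  assumes "1 \<le> r" "ordered_config r a b \<mu>" "psum n {1..r} \<mu> a b = 0"
  shows "n + 2 \<le> changes (cyclic_seq n r \<mu>)"
  using assms
proof (induction r arbitrary: n a b \<mu> rule: nat_induct_at_least)
  case base
  have "psum n {1..1} \<mu> a b = smult (\<mu> 1) ([:b 1, a 1:] ^ n)" by (simp add: psum_def)
  moreover have "\<mu> 1 \<noteq> 0" "[:b 1, a 1:] \<noteq> 0" using ordered_configD(1)[OF base(1), of 1] by auto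
  ultimately show ?case using base(2) by simp
next
  case (Suc r)
  let ?s = "changes (cyclic_seq n (Suc r) \<mu>)"
  have nz: "\<forall>k. 1 \<le> k \<and> k \<le> Suc r \<longrightarrow> \<mu> k \<noteq> 0" using ordered_configD(1)[OF Suc.prems(1)] by blast
  have par: "even ?s = even n" by (rule cyclic_seq_parity[OF nz]) simp
  have s: "1 \<le> ?s"
  proof (rule ccontr)
    assume "\<not> 1 \<le> ?s"
    then have "changes (cyclic_seq n (Suc r) \<mu>) = 0" by simp
    from cyclic_seq_no_changes[OF nz _ this] psum_definite(1)[OF Suc.prems(1)] Suc.hyps Suc.prems(2)
    show False by simp
  qed
  have "n + 1 \<le> ?s"
  proof (cases "n = 0")
    case False
    then have n: "1 \<le> n" by simp
    have r: "2 \<le> Suc r" using Suc.hyps by simp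
    obtain \<nu> a' b' where C': "ordered_config (Suc r - 1) a' b' \<nu>"
      and s': "changes (cyclic_seq (n - 1) (Suc r - 1) \<nu>) \<le> ?s"
      and zero: "psum n {1..Suc r} \<mu> a b = 0 \<Longrightarrow> psum (n - 1) {1..Suc r - 1} \<nu> a' b' = 0"
      using reduction_step[OF Suc.prems(1) r n s] by blast
    have "n - 1 + 2 \<le> changes (cyclic_seq (n - 1) r \<nu>)"
      using Suc.IH C' zero Suc.prems(2) by simp
    then show ?thesis using s' n by simp
  qed (use s in simp)
  then show ?case using le_by_parity[of ?s "n + 2"] par by simp
qed

lemma psum_root_bound:
  assumes "2 \<le> r" "ordered_config r a b \<mu>" "psum n {1..r} \<mu> a b \<noteq> 0"
  shows "proj_root_count n (psum n {1..r} \<mu> a b) \<le> changes (cyclic_seq n r \<mu>)"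
  using assms
proof (induction r arbitrary: n a b \<mu> rule: less_induct)
  case (less r)
  let ?F = "psum n {1..r} \<mu> a b" and ?s = "changes (cyclic_seq n r \<mu>)"
  note C = less.prems(2) and F = less.prems(3)
  have nz: "\<forall>k. 1 \<le> k \<and> k \<le> r \<longrightarrow> \<mu> k \<noteq> 0" using ordered_configD(1)[OF C] by blast
  have par: "even ?s = even n" by (rule cyclic_seq_parity[OF nz]) (use less.prems in simp)
  have parF: "even (proj_root_count n ?F + n)" by (rule proj_root_count_parity[OF F degree_psum])
  have leF: "proj_root_count n ?F \<le> n" by (rule proj_root_count_le[OF F degree_psum])
  show ?case
  proof (cases "?s = 0")
    case True
    with cyclic_seq_no_changes[OF nz] less.prems show ?thesis
      using psum_definite(2)[OF C less.prems(1)] by simp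
  next
    case False
    text \<open>By parity it suffices to show the bound up to one.\<close>
    have "proj_root_count n ?F \<le> ?s + 1"
    proof (cases "n = 0 \<or> r = 2")
      case True
      then consider "n = 0" | "r = 2" "1 \<le> n" by linarith
      then show ?thesis
      proof cases
        case 1
        then show ?thesis using leF by simp
      next
        case 2
        then show ?thesis using two_terms_bound[of a b \<mu> n] C F \<open>?s \<noteq> 0\<close> by simp
      qed
    next
      case False
      then have n: "1 \<le> n" and r: "3 \<le> r" using less.prems(1) by auto
      have s1: "1 \<le> ?s" using \<open>?s \<noteq> 0\<close> by simp
      obtain \<nu> a' b' where C': "ordered_config (r - 1) a' b' \<nu>"
        and s': "changes (cyclic_seq (n - 1) (r - 1) \<nu>) \<le> ?s"
        and step: "?F \<noteq> 0 \<Longrightarrow> psum (n - 1) {1..r-1} \<nu> a' b' \<noteq> 0 \<Longrightarrow>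
          proj_root_count n ?F \<le> proj_root_count (n - 1) (psum (n - 1) {1..r-1} \<nu> a' b') + 1"
        using reduction_step[OF C less.prems(1) n s1] by blast
      show ?thesis
      proof (cases "psum (n - 1) {1..r-1} \<nu> a' b' = 0")
        case True
        have "n - 1 + 2 \<le> changes (cyclic_seq (n - 1) (r - 1) \<nu>)"
          by (rule vanishing_psum_changes[OF _ C' True]) (use r in simp)
        then show ?thesis using s' leF n by linarith
      next
        case False
        have "proj_root_count (n - 1) (psum (n - 1) {1..r-1} \<nu> a' b')
            \<le> changes (cyclic_seq (n - 1) (r - 1) \<nu>)"
          by (rule less.IH) (use r C' False in auto)
        then show ?thesis using step[OF F False] s' by linarith
      qed
    qed
    then show ?thesis using le_by_parity[of ?s "proj_root_count n ?F"] par parF by simp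
  qed
qed


section \<open>From binary forms to polynomials\<close>

lemma binary_form_dehomogenise:
  assumes "is_binary_form d p" "p \<noteq> (\<lambda>x y. 0)"
  obtains f where "f \<noteq> 0" "degree f \<le> d" "\<And>t. poly f t = p t 1"
proof -
  obtain c where p: "p = binform d c" using assms(1) unfolding is_binary_form_def by auto
  define f where "f = (\<Sum>i\<le>d. monom (c i) i)"
  have "poly f t = p t 1" for t unfolding f_def p binform_def by (simp add: poly_sum poly_monom)
  moreover have "degree f \<le> d"
    unfolding f_def by (rule degree_sum_le) (auto intro: order.trans[OF degree_monom_le])
  moreover have "f \<noteq> 0"
  proof
    assume "f = 0"
    moreover have "coeff f i = c i" if "i \<le> d" for i
      using that unfolding f_def by (simp add: coeff_sum coeff_monom)
    ultimately have "c i = 0" if "i \<le> d" for i using that by simp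
    then have "p = (\<lambda>x y. 0)" unfolding p binform_def by (intro ext) simp
    with assms(2) show False ..
  qed
  ultimately show ?thesis using that by blast
qed

lemma lin_factors_le_proj_root_count:
  assumes "has_lin_factors d p k" "f \<noteq> 0" "\<And>t. poly f t = p t 1"
  shows "k \<le> proj_root_count d f"
proof -
  obtain a b g where k: "k \<le> d" and ab: "\<forall>i<k. a i \<noteq> 0 \<or> b i \<noteq> 0"
    and g: "is_binary_form (d - k) g" and fac: "\<forall>x y. p x y = (\<Prod>i<k. a i * x + b i * y) * g x y"
    using assms(1) unfolding has_lin_factors_def by blast
  obtain c where g': "g = binform (d - k) c" using g unfolding is_binary_form_def by auto
  define g1 where "g1 = (\<Sum>i\<le>d - k. monom (c i) i)"
  have pg: "poly g1 t = g t 1" for t unfolding g1_def g' binform_def by (simp add: poly_sum poly_monom)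
  have "degree g1 \<le> d - k"
    unfolding g1_def by (rule degree_sum_le) (auto intro: order.trans[OF degree_monom_le])
  moreover have "f = (\<Prod>i<k. [:b i, a i:]) * g1"
    using fac assms(3) pg
    by (intro poly_eq_poly_eq_iff[THEN iffD1]) (simp add: fun_eq_iff poly_prod algebra_simps)
  ultimately show ?thesis
    using linear_factors_le_proj_root_count[OF assms(2) _ _ _ k] ab by auto
qed

text \<open>The maximal number of real linear factors is attained (it is bounded by the degree).\<close>
lemma has_num_real_lin_factors:
  assumes "is_binary_form d p"
  shows "has_lin_factors d p (num_real_lin_factors d p)"
proof -
  have "has_lin_factors d p 0" unfolding has_lin_factors_def using assms by auto
  then show ?thesis unfolding num_real_lin_factors_def
    by (rule GreatestI_nat[where b = d]) (simp add: has_lin_factors_def)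
qed

lemma chain_less:
  fixes \<theta> :: "nat \<Rightarrow> 'a::order"
  assumes "\<forall>k. 1 \<le> k \<and> k < r \<longrightarrow> \<theta> k < \<theta> (Suc k)"
  shows "1 \<le> i \<Longrightarrow> i < k \<Longrightarrow> k \<le> r \<Longrightarrow> \<theta> i < \<theta> k"
proof (induction k)
  case (Suc k)
  then show ?case using assms by (cases "i = k") (auto intro: order.strict_trans)
qed simp

text \<open>Lines at increasing angles in (-pi/2, pi/2] give an ordered configuration: the orientation
  of two of them is minus the sine of the angle between them.\<close>
lemma angles_ordered_config:
  assumes "- (pi / 2) < \<theta> 1" "\<forall>k. 1 \<le> k \<and> k < r \<longrightarrow> \<theta> k < \<theta> (Suc k)" "\<theta> r \<le> pi / 2"
    and "\<forall>k. 1 \<le> k \<and> k \<le> r \<longrightarrow> \<mu> k \<noteq> 0"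
  shows "ordered_config r (\<lambda>k. cos (\<theta> k)) (\<lambda>k. - sin (\<theta> k)) \<mu>"
  unfolding ordered_config_def
proof (rule conjI; intro allI impI)
  fix k assume "1 \<le> k \<and> k \<le> r"
  moreover have "cos (\<theta> k) \<noteq> 0 \<or> sin (\<theta> k) \<noteq> 0"
    using sin_cos_squared_add[of "\<theta> k"] by (metis power_zero_numeral add_0 zero_neq_one)
  ultimately show "\<mu> k \<noteq> 0 \<and> (cos (\<theta> k) \<noteq> 0 \<or> - sin (\<theta> k) \<noteq> 0)"
    using assms(4) by auto
next
  fix i k assume ik: "1 \<le> i \<and> i < k \<and> k \<le> r"
  have "\<theta> i < \<theta> k" using chain_less[OF assms(2)] ik by auto
  moreover have "\<theta> 1 \<le> \<theta> i" using chain_less[OF assms(2), of 1 i] ik by (cases "i = 1") auto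
  moreover have "\<theta> k \<le> \<theta> r" using chain_less[OF assms(2), of k r] ik by (cases "k = r") auto
  ultimately have "0 < sin (\<theta> k - \<theta> i)" by (intro sin_gt_zero) (use assms(1,3) in auto)
  moreover have "cross (\<lambda>k. cos (\<theta> k)) (\<lambda>k. - sin (\<theta> k)) i k = - sin (\<theta> k - \<theta> i)"
    unfolding cross_def by (simp add: sin_diff algebra_simps)
  ultimately show "cross (\<lambda>k. cos (\<theta> k)) (\<lambda>k. - sin (\<theta> k)) i k < 0" by simp
qed


theorem corollary2p5:
  fixes d r :: nat and p :: "real \<Rightarrow> real \<Rightarrow> real"
    and lam \<theta> :: "nat \<Rightarrow> real" and \<tau> :: nat
  assumes "d \<ge> 1"
    and "is_binary_form d p"
    and "p \<noteq> (\<lambda>x y. 0)"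
    and "\<tau> = num_real_lin_factors d p"
    and "r \<ge> 2"
    and "\<forall>x y. p x y = (\<Sum>k=1..r. lam k * (cos (\<theta> k) * x - sin (\<theta> k) * y) ^ d)"
    and "- (pi / 2) < \<theta> 1"
    and "\<forall>k. 1 \<le> k \<and> k < r \<longrightarrow> \<theta> k < \<theta> (Suc k)"
    and "\<theta> r \<le> pi / 2"
    and "\<forall>k. 1 \<le> k \<and> k \<le> r \<longrightarrow> lam k \<noteq> 0"
  shows "\<tau> \<le> sign_changes (map lam [1..<r+1] @ [(-1) ^ d * lam 1])"
proof -
  obtain f where f: "f \<noteq> 0" and pf: "\<And>t. poly f t = p t 1"
    using binary_form_dehomogenise[OF assms(2,3)] by blast
  let ?a = "\<lambda>k. cos (\<theta> k)" and ?b = "\<lambda>k. - sin (\<theta> k)"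
  have psum: "f = psum d {1..r} lam ?a ?b"
    using pf assms(6)
    by (intro poly_eq_poly_eq_iff[THEN iffD1]) (simp add: fun_eq_iff poly_psum algebra_simps)
  have "\<tau> \<le> proj_root_count d f"
    using lin_factors_le_proj_root_count[OF has_num_real_lin_factors[OF assms(2)] f pf] assms(4)
    by simp
  also have "\<dots> \<le> changes (cyclic_seq d r lam)"
    unfolding psum
    by (rule psum_root_bound[OF assms(5) angles_ordered_config[OF assms(7-10)]]) (use f psum in simp)
  also have "\<dots> = sign_changes (map lam [1..<r+1] @ [(-1) ^ d * lam 1])"
    using sign_changes_eq_changes[OF cyclic_seq_nonzero[OF assms(10)]] assms(5)
    unfolding cyclic_seq_def by simp
  finally show ?thesis .
qed
end
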